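(* Fix a round $r$. Let $\mathcal V^r$ be the multiset of all disseminated perturbed adoption vectors in round $r$, $V^r=|\mathcal V^r|$, and for each agent $i$ let $\mathcal V^r_i\subseteq\mathcal V^r$ be the sub-multiset sampled by $i$, $V^r_i=|\mathcal V^r_i|$. Let $\Lambda^r_{i,j}=\frac1{V^r_i}\sum_{\widetilde{\mathbf X}\in\mathcal V^r_i}[\widetilde{\mathbf X}]_j$ and $\Lambda^r_j=\frac1{V^r}\sum_{\widetilde{\mathbf X}\in\mathcal V^r}[\widetilde{\mathbf X}]_j$. Assume the $\frac1{N^3}$-nearly uniform distribution holds in round $r$, i.e., each token independently ends at each given agent with probability in $[\frac1N-\frac1{N^3},\frac1N+\frac1{N^3}]$ (which happens with probability at least $1-N^{-h/3}$). Then for all agents $i$ and options $j$, $$\xi_0\le\frac{\mathbb E\left[\Lambda^r_{i,j}\,\middle|\,V^r_i,\widetilde{\mathcal X}^r\right]}{\Lambda^r_j}\le\xi_1,$$ where $$\xi_0=\left(1-\frac{2}{N^2+1}\right)^{V^r_i}\left(1-\frac{2}{N^3-N^2+1}\right)^{V^r-V^r_i},\qquad \xi_1=\left(1+\frac{2}{N^2-1}\right)^{V^r_i}\left(1+\frac{2}{N^3-N^2-1}\right)^{V^r-V^r_i}.$$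
   Context: Agents $\mathcal N=\{1,\dots,N\}$ form a connected non-bipartite graph. In round $r$, each agent that adopted an option in round $r-1$ has a perturbed adoption vector $\widetilde{\mathbf X}^r_i\in\{0,1\}^M$ (obtained by independently flipping each coordinate of its adoption vector with probability $\frac1{e^{\varepsilon/2}+1}$); $\widetilde{\mathcal X}^r=\{\widetilde{\mathbf X}^r_i\}_i$. Each such agent launches $hg(N)$ independent Metropolis–Hastings random walk tokens carrying its vector (so $\mathcal V^r$ consists of $hg(N)$ copies of each perturbed vector), where $h=16\sigma/(1-\beta)$, $\sigma\ge11$, $\beta\in(1/2,1)$, and $g:\mathbb N^+\to\mathbb R$ satisfies $\ell\ln N<g(N)<\ell N$ for every $\ell>0$ and all sufficiently large $N$. A token is sampled by the agent at which its walk ends. $[\widetilde{\mathbf X}]_j$ denotes the $j$-th coordinate. *)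

theory Defs
  imports "HOL-Probability.Probability"
begin

(* Agents are 1..N.  The adopting agents of round r form a set A \<subseteq> {1..N}.
   Agent k's perturbed adoption vector is Xt k :: nat \<Rightarrow> bool (coordinate j < M).
   Each adopting agent k launches K (= h g(N)) tokens; token (k,c), c < K,
   is the c-th copy carrying Xt k. *)
definition tokens :: "nat set \<Rightarrow> nat \<Rightarrow> (nat \<times> nat) set" where
  "tokens A K = A \<times> {..<K}"

definition endpoint_pmf :: "(nat \<times> nat) set \<Rightarrow> ((nat \<times> nat) \<Rightarrow> nat pmf) \<Rightarrow> ((nat \<times> nat) \<Rightarrow> nat) pmf" where
  "endpoint_pmf T P = Pi_pmf T 0 P"

definition nearly_uniform :: "nat \<Rightarrow> (nat \<times> nat) set \<Rightarrow> ((nat \<times> nat) \<Rightarrow> nat pmf) \<Rightarrow> bool" where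
  "nearly_uniform N T P \<longleftrightarrow>
     (\<forall>t\<in>T. set_pmf (P t) \<subseteq> {1..N} \<and>
        (\<forall>k\<in>{1..N}. 1 / real N - 1 / real N ^ 3 \<le> pmf (P t) k \<and>
                      pmf (P t) k \<le> 1 / real N + 1 / real N ^ 3))"

definition sampled :: "(nat \<times> nat) set \<Rightarrow> ((nat \<times> nat) \<Rightarrow> nat) \<Rightarrow> nat \<Rightarrow> (nat \<times> nat) set" where
  "sampled T w i = {t \<in> T. w t = i}"

definition Lambda_ij :: "(nat \<Rightarrow> nat \<Rightarrow> bool) \<Rightarrow> (nat \<times> nat) set \<Rightarrow> ((nat \<times> nat) \<Rightarrow> nat) \<Rightarrow> nat \<Rightarrow> nat \<Rightarrow> real" where
  "Lambda_ij Xt T w i j =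
     (\<Sum>t\<in>sampled T w i. of_bool (Xt (fst t) j)) / real (card (sampled T w i))"

definition Lambda_j :: "(nat \<Rightarrow> nat \<Rightarrow> bool) \<Rightarrow> (nat \<times> nat) set \<Rightarrow> nat \<Rightarrow> real" where
  "Lambda_j Xt T j = (\<Sum>t\<in>T. of_bool (Xt (fst t) j)) / real (card T)"

definition xi0 :: "nat \<Rightarrow> nat \<Rightarrow> nat \<Rightarrow> real" where
  "xi0 N V Vi = (1 - 2 / (real N ^ 2 + 1)) ^ Vi * (1 - 2 / (real N ^ 3 - real N ^ 2 + 1)) ^ (V - Vi)"

definition xi1 :: "nat \<Rightarrow> nat \<Rightarrow> nat \<Rightarrow> real" where
  "xi1 N V Vi = (1 + 2 / (real N ^ 2 - 1)) ^ Vi * (1 + 2 / (real N ^ 3 - real N ^ 2 - 1)) ^ (V - Vi)"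

end

(* Write a, b = 1/N -+ 1/N^3 for the bounds on the probability that a token ends at agent i.
   The set of tokens sampled by i is a product of independent Bernoulli trials, so it equals a
   given v-set U of tokens with probability
     W U = (prod_{t in U} p_t) * (prod_{t notin U} (1 - p_t)),
   which lies between lo = a^v (1-b)^(V-v) and hi = b^v (1-a)^(V-v).  Conditioned on having v
   elements, the expected mean of the sampled vectors is therefore an average of the means of all
   v-sets with weights W U, which differ from uniform weights by a factor in [lo/hi, hi/lo].  The
   uniform average of these means is the overall mean Lambda_j, as every token lies in the same
   number of v-sets, and lo/hi and hi/lo are exactly xi0 and xi1. *)

theory Submission
  imports Defs
begin

lemma card_subsets_containing:
  assumes "finite T" "t \<in> T" "v \<ge> 1"
  shows "card {U. U \<subseteq> T \<and> card U = v \<and> t \<in> U} = (card T - 1) choose (v - 1)"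
proof -
  have eq: "{U. U \<subseteq> T \<and> card U = v \<and> t \<in> U} = insert t ` {U. U \<subseteq> T - {t} \<and> card U = v - 1}"
  proof (intro equalityI subsetI)
    fix U assume "U \<in> {U. U \<subseteq> T \<and> card U = v \<and> t \<in> U}"
    hence U: "U \<subseteq> T" "card U = v" "t \<in> U" by auto
    hence "card (U - {t}) = v - 1" "U = insert t (U - {t})"
      using finite_subset[OF U(1) assms(1)] by auto
    thus "U \<in> insert t ` {U. U \<subseteq> T - {t} \<and> card U = v - 1}" using U by blast
  next
    fix U assume "U \<in> insert t ` {U. U \<subseteq> T - {t} \<and> card U = v - 1}"
    then obtain U' where U': "U = insert t U'" "U' \<subseteq> T - {t}" "card U' = v - 1" by auto
    moreover have "finite U'" "t \<notin> U'" using U'(2) assms(1) finite_subset by auto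
    ultimately have "card U = v" using assms(3) by simp
    thus "U \<in> {U. U \<subseteq> T \<and> card U = v \<and> t \<in> U}" using U' assms(2) by auto
  qed
  have "inj_on (insert t) {U. U \<subseteq> T - {t} \<and> card U = v - 1}"
    by (rule inj_onI) blast
  hence "card {U. U \<subseteq> T \<and> card U = v \<and> t \<in> U} = card {U. U \<subseteq> T - {t} \<and> card U = v - 1}"
    unfolding eq by (rule card_image)
  also have "\<dots> = card (T - {t}) choose (v - 1)"
    using assms(1) by (intro n_subsets) simp
  finally show ?thesis using assms by simp
qed

lemma sum_subset_sums:
  fixes x :: "'a \<Rightarrow> 'b :: comm_semiring_1"
  assumes "finite T" "v \<ge> 1"
  shows "(\<Sum>U\<in>{U. U \<subseteq> T \<and> card U = v}. \<Sum>t\<in>U. x t)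
           = of_nat ((card T - 1) choose (v - 1)) * (\<Sum>t\<in>T. x t)"
proof -
  let ?C = "{U. U \<subseteq> T \<and> card U = v}"
  have "(\<Sum>U\<in>?C. \<Sum>t\<in>U. x t) = (\<Sum>U\<in>?C. \<Sum>t\<in>T. if t \<in> U then x t else 0)"
    using assms(1) by (intro sum.cong[OF refl]) (simp add: sum.inter_restrict[symmetric] Int_absorb1)
  also have "\<dots> = (\<Sum>t\<in>T. \<Sum>U\<in>?C. if t \<in> U then x t else 0)"
    by (rule sum.swap)
  also have "\<dots> = (\<Sum>t\<in>T. of_nat (card {U. U \<subseteq> T \<and> card U = v \<and> t \<in> U}) * x t)"
    using assms(1) by (intro sum.cong refl) (simp add: sum.If_cases Int_def conj_ac)
  also have "\<dots> = (\<Sum>t\<in>T. of_nat ((card T - 1) choose (v - 1)) * x t)"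
    using assms by (intro sum.cong refl) (simp add: card_subsets_containing)
  finally show ?thesis by (simp add: sum_distrib_left)
qed

lemma mean_of_subset_means:
  fixes x :: "'a \<Rightarrow> real"
  assumes "finite T" "1 \<le> v" "v \<le> card T"
  shows "(\<Sum>U\<in>{U. U \<subseteq> T \<and> card U = v}. (\<Sum>t\<in>U. x t) / real (card U))
           / real (card {U. U \<subseteq> T \<and> card U = v})
         = (\<Sum>t\<in>T. x t) / real (card T)"
proof -
  let ?C = "{U. U \<subseteq> T \<and> card U = v}"
  have "(\<Sum>U\<in>?C. (\<Sum>t\<in>U. x t) / real (card U)) = (\<Sum>U\<in>?C. \<Sum>t\<in>U. x t) / real v"
    by (simp add: sum_divide_distrib)
  also have "\<dots> = real ((card T - 1) choose (v - 1)) * (\<Sum>t\<in>T. x t) / real v"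
    using assms by (simp add: sum_subset_sums)
  finally have sums: "(\<Sum>U\<in>?C. (\<Sum>t\<in>U. x t) / real (card U))
      = real ((card T - 1) choose (v - 1)) * (\<Sum>t\<in>T. x t) / real v" .
  have absorption: "real v * real (card T choose v) = real (card T) * real ((card T - 1) choose (v - 1))"
    using times_binomial_minus1_eq[of v "card T"] assms(2) by (simp flip: of_nat_mult)
  have "0 < card T choose v"
    using assms(3) by (simp add: zero_less_binomial_iff)
  moreover have "card ?C = card T choose v"
    using assms(1) by (rule n_subsets)
  ultimately show ?thesis
    unfolding sums using assms(2,3) absorption by (simp add: field_simps)
qed

lemma weighted_mean_bounds:
  fixes g W :: "'a \<Rightarrow> real"
  assumes "finite C" "C \<noteq> {}" "0 < lo"
    and W: "\<And>U. U \<in> C \<Longrightarrow> lo \<le> W U \<and> W U \<le> hi"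
    and g: "\<And>U. U \<in> C \<Longrightarrow> 0 \<le> g U"
  shows "lo / hi * (sum g C / card C) \<le> (\<Sum>U\<in>C. g U * W U) / sum W C"
    and "(\<Sum>U\<in>C. g U * W U) / sum W C \<le> hi / lo * (sum g C / card C)"
proof -
  have n: "0 < real (card C)" using assms(1,2) by (simp add: card_gt_0_iff)
  have "lo \<le> hi" using W assms(2) by fastforce
  have G: "0 \<le> sum g C" using g by (simp add: sum_nonneg)
  have W_lo: "lo * card C \<le> sum W C" and W_hi: "sum W C \<le> hi * card C"
    using sum_mono[of C "\<lambda>_. lo" W] sum_mono[of C W "\<lambda>_. hi"] W by (auto simp: mult.commute)
  have "(\<Sum>U\<in>C. lo * g U) \<le> (\<Sum>U\<in>C. W U * g U)"
    and "(\<Sum>U\<in>C. W U * g U) \<le> (\<Sum>U\<in>C. hi * g U)"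
    using W g by (auto intro!: sum_mono mult_right_mono)
  hence gW_lo: "lo * sum g C \<le> (\<Sum>U\<in>C. g U * W U)"
    and gW_hi: "(\<Sum>U\<in>C. g U * W U) \<le> hi * sum g C"
    by (simp_all add: sum_distrib_left mult.commute)
  have "lo / hi * (sum g C / card C) = lo * sum g C / (hi * card C)" by simp
  also have "\<dots> \<le> (\<Sum>U\<in>C. g U * W U) / sum W C"
    using gW_lo W_lo W_hi mult_nonneg_nonneg[OF _ G, of lo] mult_pos_pos[OF \<open>0 < lo\<close> n] \<open>0 < lo\<close>
    by (intro frac_le) auto
  finally show "lo / hi * (sum g C / card C) \<le> (\<Sum>U\<in>C. g U * W U) / sum W C" .
  have "(\<Sum>U\<in>C. g U * W U) / sum W C \<le> hi * sum g C / (lo * card C)"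
    using gW_hi W_lo G \<open>0 < lo\<close> \<open>lo \<le> hi\<close> n by (intro frac_le) auto
  also have "\<dots> = hi / lo * (sum g C / card C)" by simp
  finally show "(\<Sum>U\<in>C. g U * W U) / sum W C \<le> hi / lo * (sum g C / card C)" .
qed

lemma pmf_fiber_Pi_pmf:
  assumes "finite A" "U \<subseteq> A"
  shows "pmf (map_pmf (\<lambda>w. {t \<in> A. w t = i}) (Pi_pmf A d P)) U
           = (\<Prod>t\<in>U. pmf (P t) i) * (\<Prod>t\<in>A - U. 1 - pmf (P t) i)"
proof -
  define B where "B = (\<lambda>t. if t \<in> U then {i} else - {i})"
  have "(\<lambda>w. {t \<in> A. w t = i}) -` {U} = Pi A B"
    using assms(2) by (auto simp: B_def Pi_def)
  hence "pmf (map_pmf (\<lambda>w. {t \<in> A. w t = i}) (Pi_pmf A d P)) U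
           = (\<Prod>t\<in>A. measure_pmf.prob (P t) (B t))"
    using assms(1) by (simp add: pmf_map measure_Pi_pmf_Pi)
  also have "\<dots> = (\<Prod>t\<in>A. if t \<in> U then pmf (P t) i else 1 - pmf (P t) i)"
    using measure_pmf.prob_compl[of "{i}"]
    by (intro prod.cong refl) (simp add: B_def measure_pmf_single Compl_eq_Diff_UNIV)
  also have "\<dots> = (\<Prod>t\<in>U. pmf (P t) i) * (\<Prod>t\<in>A - U. 1 - pmf (P t) i)"
    using assms by (simp add: prod.If_cases Int_absorb1 Diff_eq)
  finally show ?thesis .
qed

lemma expectation_cond_pmf_finite:
  fixes f :: "'a \<Rightarrow> real"
  assumes "finite B" "B \<subseteq> C" "set_pmf R \<inter> C \<subseteq> B" "set_pmf R \<inter> C \<noteq> {}"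
  shows "measure_pmf.expectation (cond_pmf R C) f = (\<Sum>U\<in>B. f U * pmf R U) / (\<Sum>U\<in>B. pmf R U)"
proof -
  have "C \<inter> set_pmf R = B \<inter> set_pmf R"
    using assms(2,3) by blast
  hence "measure_pmf.prob R C = measure_pmf.prob R B"
    by (metis measure_Int_set_pmf)
  also have "\<dots> = (\<Sum>U\<in>B. pmf R U)"
    using assms(1) by (rule measure_measure_pmf_finite)
  finally have C: "measure_pmf.prob R C = (\<Sum>U\<in>B. pmf R U)" .
  have "measure_pmf.expectation (cond_pmf R C) f = (\<Sum>U\<in>B. f U * pmf (cond_pmf R C) U)"
    using assms(1,3,4) by (intro integral_measure_pmf_real) auto
  also have "\<dots> = (\<Sum>U\<in>B. f U * pmf R U / (\<Sum>U\<in>B. pmf R U))"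
    using assms(2,4) by (intro sum.cong refl) (auto simp: pmf_cond C)
  finally show ?thesis by (simp add: sum_divide_distrib)
qed

lemma prod_between_powers:
  fixes f :: "'a \<Rightarrow> 'b :: linordered_idom"
  assumes "\<And>t. t \<in> A \<Longrightarrow> lo \<le> f t \<and> f t \<le> hi" "0 \<le> lo"
  shows "lo ^ card A \<le> prod f A \<and> prod f A \<le> hi ^ card A"
proof -
  have "prod (\<lambda>_. lo) A \<le> prod f A"
    using assms by (intro prod_mono) auto
  moreover have "prod f A \<le> prod (\<lambda>_. hi) A"
    using assms by (intro prod_mono) (auto intro: order_trans)
  ultimately show ?thesis by simp
qed

lemma Bernoulli_weight_bounds:
  fixes p :: "'a \<Rightarrow> real"
  assumes "finite A" "U \<subseteq> A" "\<And>t. t \<in> A \<Longrightarrow> a \<le> p t \<and> p t \<le> b" "0 \<le> a" "b \<le> 1"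
  shows "a ^ card U * (1 - b) ^ (card A - card U) \<le> (\<Prod>t\<in>U. p t) * (\<Prod>t\<in>A - U. 1 - p t)"
    and "(\<Prod>t\<in>U. p t) * (\<Prod>t\<in>A - U. 1 - p t) \<le> b ^ card U * (1 - a) ^ (card A - card U)"
proof -
  have card_diff: "card (A - U) = card A - card U"
    using assms(1,2) by (simp add: card_Diff_subset finite_subset)
  have U: "a ^ card U \<le> (\<Prod>t\<in>U. p t) \<and> (\<Prod>t\<in>U. p t) \<le> b ^ card U"
    using assms(2-4) by (intro prod_between_powers) auto
  have AU: "(1 - b) ^ card (A - U) \<le> (\<Prod>t\<in>A - U. 1 - p t) \<and> (\<Prod>t\<in>A - U. 1 - p t) \<le> (1 - a) ^ card (A - U)"
    using assms(3,5) by (intro prod_between_powers) auto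
  have "0 \<le> a ^ card U" "0 \<le> (1 - b) ^ card (A - U)"
    using assms(4,5) by simp_all
  thus "a ^ card U * (1 - b) ^ (card A - card U) \<le> (\<Prod>t\<in>U. p t) * (\<Prod>t\<in>A - U. 1 - p t)"
    and "(\<Prod>t\<in>U. p t) * (\<Prod>t\<in>A - U. 1 - p t) \<le> b ^ card U * (1 - a) ^ (card A - card U)"
    using U AU unfolding card_diff by (auto intro!: mult_mono)
qed

lemma nearly_uniform_bound_ratios:
  fixes n :: real
  assumes "2 \<le> n"
  defines "a \<equiv> 1 / n - 1 / n ^ 3" and "b \<equiv> 1 / n + 1 / n ^ 3"
  shows "0 < a" "b < 1"
    and "a / b = 1 - 2 / (n ^ 2 + 1)"
    and "(1 - b) / (1 - a) = 1 - 2 / (n ^ 3 - n ^ 2 + 1)"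
    and "b / a = 1 + 2 / (n ^ 2 - 1)"
    and "(1 - a) / (1 - b) = 1 + 2 / (n ^ 3 - n ^ 2 - 1)"
proof -
  have n3: "0 < n ^ 3" using assms(1) by simp
  have "4 \<le> n ^ 2" using power_mono[OF assms(1), of 2] by simp
  moreover have "2 * n ^ 2 \<le> n ^ 3"
    using assms(1) by (simp add: power3_eq_cube power2_eq_square mult_right_mono)
  ultimately have pos: "0 < n ^ 2 - 1" "0 < n ^ 2 + 1" "0 < n ^ 3 - n ^ 2 - 1" "0 < n ^ 3 - n ^ 2 + 1"
    by simp_all
  have a: "a = (n ^ 2 - 1) / n ^ 3" and b: "b = (n ^ 2 + 1) / n ^ 3"
    using assms(1) by (simp_all add: a_def b_def field_simps power3_eq_cube power2_eq_square)
  have a': "1 - a = (n ^ 3 - n ^ 2 + 1) / n ^ 3" and b': "1 - b = (n ^ 3 - n ^ 2 - 1) / n ^ 3"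
    using n3 by (simp_all add: a b field_simps)
  show "0 < a" using pos n3 by (simp add: a)
  have "0 < 1 - b" unfolding b' using pos n3 by simp
  thus "b < 1" by simp
  have "a / b = (n ^ 2 - 1) / (n ^ 2 + 1)" "(1 - b) / (1 - a) = (n ^ 3 - n ^ 2 - 1) / (n ^ 3 - n ^ 2 + 1)"
    using n3 unfolding a' b' by (simp_all add: a b)
  thus "a / b = 1 - 2 / (n ^ 2 + 1)" "(1 - b) / (1 - a) = 1 - 2 / (n ^ 3 - n ^ 2 + 1)"
    using pos by (simp_all add: field_simps)
  have "b / a = (n ^ 2 + 1) / (n ^ 2 - 1)" "(1 - a) / (1 - b) = (n ^ 3 - n ^ 2 + 1) / (n ^ 3 - n ^ 2 - 1)"
    using n3 unfolding a' b' by (simp_all add: a b)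
  thus "b / a = 1 + 2 / (n ^ 2 - 1)" "(1 - a) / (1 - b) = 1 + 2 / (n ^ 3 - n ^ 2 - 1)"
    using pos by (simp_all add: field_simps)
qed

lemma pmf_sampled:
  assumes "finite T" "U \<subseteq> T"
  shows "pmf (map_pmf (\<lambda>w. sampled T w i) (endpoint_pmf T P)) U
           = (\<Prod>t\<in>U. pmf (P t) i) * (\<Prod>t\<in>T - U. 1 - pmf (P t) i)"
  unfolding sampled_def endpoint_pmf_def using assms by (rule pmf_fiber_Pi_pmf)

lemma pmf_sampled_bounds:
  assumes "finite T" "nearly_uniform N T P" "i \<in> {1..N}" "U \<subseteq> T"
  defines "a \<equiv> 1 / real N - 1 / real N ^ 3" and "b \<equiv> 1 / real N + 1 / real N ^ 3"
  assumes a_nonneg: "0 \<le> a" and b_le_1: "b \<le> 1"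
  shows "a ^ card U * (1 - b) ^ (card T - card U)
           \<le> pmf (map_pmf (\<lambda>w. sampled T w i) (endpoint_pmf T P)) U"
    and "pmf (map_pmf (\<lambda>w. sampled T w i) (endpoint_pmf T P)) U
           \<le> b ^ card U * (1 - a) ^ (card T - card U)"
proof -
  have "a \<le> pmf (P t) i \<and> pmf (P t) i \<le> b" if "t \<in> T" for t
    using that assms(2,3) by (simp add: nearly_uniform_def a_def b_def)
  thus "a ^ card U * (1 - b) ^ (card T - card U)
          \<le> pmf (map_pmf (\<lambda>w. sampled T w i) (endpoint_pmf T P)) U"
    and "pmf (map_pmf (\<lambda>w. sampled T w i) (endpoint_pmf T P)) U
          \<le> b ^ card U * (1 - a) ^ (card T - card U)"
    unfolding pmf_sampled[OF assms(1,4)] using assms(1,4) a_nonneg b_le_1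
    by (simp_all add: Bernoulli_weight_bounds)
qed

lemma expectation_Lambda_ij:
  assumes "finite T" "\<exists>w\<in>set_pmf (endpoint_pmf T P). card (sampled T w i) = v"
  defines "R \<equiv> map_pmf (\<lambda>w. sampled T w i) (endpoint_pmf T P)"
    and "C \<equiv> {U. U \<subseteq> T \<and> card U = v}"
  shows "measure_pmf.expectation (cond_pmf (endpoint_pmf T P) {w. card (sampled T w i) = v})
             (\<lambda>w. Lambda_ij Xt T w i j)
         = (\<Sum>U\<in>C. (\<Sum>t\<in>U. of_bool (Xt (fst t) j)) / real (card U) * pmf R U) / (\<Sum>U\<in>C. pmf R U)"
proof -
  let ?S = "\<lambda>w. sampled T w i"
  have event: "{w. card (?S w) = v} = ?S -` {U. card U = v}" by auto
  have hit: "set_pmf (endpoint_pmf T P) \<inter> ?S -` {U. card U = v} \<noteq> {}"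
    using assms(2) by auto
  have "measure_pmf.expectation (cond_pmf (endpoint_pmf T P) {w. card (?S w) = v})
          (\<lambda>w. Lambda_ij Xt T w i j)
        = measure_pmf.expectation (cond_pmf R {U. card U = v})
            (\<lambda>U. (\<Sum>t\<in>U. of_bool (Xt (fst t) j)) / real (card U))"
    unfolding R_def event cond_map_pmf[OF hit] by (simp add: Lambda_ij_def)
  also have "\<dots> = (\<Sum>U\<in>C. (\<Sum>t\<in>U. of_bool (Xt (fst t) j)) / real (card U) * pmf R U) / (\<Sum>U\<in>C. pmf R U)"
    using assms(1) hit unfolding R_def C_def
    by (intro expectation_cond_pmf_finite) (auto simp: sampled_def)
  finally show ?thesis .
qed

lemma expectation_Lambda_ij_bounds:
  fixes Xt :: "nat \<Rightarrow> nat \<Rightarrow> bool" and j :: nat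
  assumes "finite T" "nearly_uniform N T P" "i \<in> {1..N}" "2 \<le> N" "1 \<le> v"
    and "\<exists>w\<in>set_pmf (endpoint_pmf T P). card (sampled T w i) = v"
  defines "a \<equiv> 1 / real N - 1 / real N ^ 3" and "b \<equiv> 1 / real N + 1 / real N ^ 3"
    and "E \<equiv> measure_pmf.expectation (cond_pmf (endpoint_pmf T P) {w. card (sampled T w i) = v})
               (\<lambda>w. Lambda_ij Xt T w i j)"
  shows "(a / b) ^ v * ((1 - b) / (1 - a)) ^ (card T - v) * Lambda_j Xt T j \<le> E"
    and "E \<le> (b / a) ^ v * ((1 - a) / (1 - b)) ^ (card T - v) * Lambda_j Xt T j"
proof -
  define R where "R = map_pmf (\<lambda>w. sampled T w i) (endpoint_pmf T P)"
  define C where "C = {U. U \<subseteq> T \<and> card U = v}"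
  define g :: "(nat \<times> nat) set \<Rightarrow> real"
    where "g = (\<lambda>U. (\<Sum>t\<in>U. of_bool (Xt (fst t) j)) / real (card U))"
  define lo where "lo = a ^ v * (1 - b) ^ (card T - v)"
  define hi where "hi = b ^ v * (1 - a) ^ (card T - v)"
  have "2 \<le> real N" using assms(4) by simp
  note ab = nearly_uniform_bound_ratios(1,2)[OF this, folded a_def b_def]
  obtain w where "card (sampled T w i) = v" "sampled T w i \<subseteq> T"
    using assms(6) by (auto simp: sampled_def)
  hence "C \<noteq> {}" "v \<le> card T"
    using card_mono[OF assms(1)] by (auto simp: C_def)
  have "lo \<le> pmf R U \<and> pmf R U \<le> hi" if "U \<in> C" for U
    using that pmf_sampled_bounds[OF assms(1-3), of U] ab
    by (auto simp: R_def C_def lo_def hi_def a_def b_def)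
  moreover have "sum g C / card C = Lambda_j Xt T j"
    unfolding g_def C_def Lambda_j_def using assms(1,5) \<open>v \<le> card T\<close> by (rule mean_of_subset_means)
  moreover have "0 < lo" using ab by (simp add: lo_def)
  moreover have "E = (\<Sum>U\<in>C. g U * pmf R U) / sum (pmf R) C"
    using expectation_Lambda_ij[OF assms(1,6)] by (simp add: E_def R_def C_def g_def)
  ultimately have "lo / hi * Lambda_j Xt T j \<le> E" "E \<le> hi / lo * Lambda_j Xt T j"
    using weighted_mean_bounds[OF _ \<open>C \<noteq> {}\<close>, of lo "pmf R" hi g] assms(1)
    by (auto simp: C_def g_def sum_nonneg)
  thus "(a / b) ^ v * ((1 - b) / (1 - a)) ^ (card T - v) * Lambda_j Xt T j \<le> E"
    and "E \<le> (b / a) ^ v * ((1 - a) / (1 - b)) ^ (card T - v) * Lambda_j Xt T j"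
    by (simp_all add: lo_def hi_def power_divide)
qed

theorem lemma7:
  fixes N M K i j v :: nat and A :: "nat set" and Xt :: "nat \<Rightarrow> nat \<Rightarrow> bool"
    and P :: "nat \<times> nat \<Rightarrow> nat pmf"
  assumes "N \<ge> 3"
    and "A \<subseteq> {1..N}"
    and "K \<ge> 1"
    and "nearly_uniform N (tokens A K) P"
    and "i \<in> {1..N}" and "j < M"
    and "v \<ge> 1"
    and "\<exists>w\<in>set_pmf (endpoint_pmf (tokens A K) P). card (sampled (tokens A K) w i) = v"
    and "Lambda_j Xt (tokens A K) j > 0"
  shows "xi0 N (card (tokens A K)) v
           \<le> measure_pmf.expectation
               (cond_pmf (endpoint_pmf (tokens A K) P) {w. card (sampled (tokens A K) w i) = v})
               (\<lambda>w. Lambda_ij Xt (tokens A K) w i j) / Lambda_j Xt (tokens A K) j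
       \<and> measure_pmf.expectation
               (cond_pmf (endpoint_pmf (tokens A K) P) {w. card (sampled (tokens A K) w i) = v})
               (\<lambda>w. Lambda_ij Xt (tokens A K) w i j) / Lambda_j Xt (tokens A K) j
           \<le> xi1 N (card (tokens A K)) v"
proof -
  let ?E = "measure_pmf.expectation
    (cond_pmf (endpoint_pmf (tokens A K) P) {w. card (sampled (tokens A K) w i) = v})
    (\<lambda>w. Lambda_ij Xt (tokens A K) w i j)"
  have finT: "finite (tokens A K)"
    using assms(2) finite_subset[of A "{1..N}"] by (simp add: tokens_def)
  have "2 \<le> N" "2 \<le> real N" using assms(1) by simp_all
  note ratios = nearly_uniform_bound_ratios(3-6)[OF \<open>2 \<le> real N\<close>, symmetric]
  have "xi0 N (card (tokens A K)) v * Lambda_j Xt (tokens A K) j \<le> ?E"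
    and "?E \<le> xi1 N (card (tokens A K)) v * Lambda_j Xt (tokens A K) j"
    using expectation_Lambda_ij_bounds[OF finT assms(4,5) \<open>2 \<le> N\<close> assms(7,8)]
    unfolding xi0_def xi1_def ratios by simp_all
  thus ?thesis
    using assms(9) by (simp add: pos_le_divide_eq pos_divide_le_eq mult.commute)
qed

end
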